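(* Let $k\ge 1$, and let $E_k$, $\oplus$, $\mathcal A_k$ be as in the context. Then: (i) $(E_k,\oplus,\emptyset,\Gamma^k)$ is an effect algebra, and every element of $\mathcal A_k$ belongs to $E_k$. (ii) For every state $\rho$ on $E_k$, the function $P_\rho(\alpha_1\dots\alpha_k\mid a_1\dots a_k)=\rho\big([a_1\alpha_1]\times\cdots\times[a_k\alpha_k]\big)$ is a PR-state (in particular it satisfies the no-signaling condition). Conversely, for every PR-state $P$ there is a unique state $\rho_P$ on $E_k$ with $\rho_P\big([a_1\alpha_1]\times\cdots\times[a_k\alpha_k]\big)=P(\alpha_1\dots\alpha_k\mid a_1\dots a_k)$ for all inputs and outputs; it is given by $\rho_P(q_1\cup\dots\cup q_n)=\sum_{i=1}^n\rho_P(q_i)$ for any decomposition of an element of $E_k$ into pairwise disjoint $q_i\in\mathcal A_k$, and this value does not depend on the chosen decomposition. Hence $\rho\mapsto P_\rho$ is a bijection between the set of states on $E_k$ and the set of PR-states of the $k$-box model.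
   Context: Fix an integer $N\ge1$ (number of inputs) and nonempty finite sets $\mathcal U_1,\dots,\mathcal U_N$ ($\mathcal U_a$ is the set of outputs for input $a$). Put $\Gamma=\mathcal U_1\times\cdots\times\mathcal U_N$. For $a\in\{1,\dots,N\}$ and $\mathcal A\subseteq\mathcal U_a$ let $[a\in\mathcal A]=\{\gamma\in\Gamma:\gamma_a\in\mathcal A\}$ and $[a\alpha]=[a\in\{\alpha\}]$. For $k\ge1$ let $\mathcal A_k=\{[a_1\alpha_1]\times\cdots\times[a_k\alpha_k]\subseteq\Gamma^k : a_i\in\{1,\dots,N\},\ \alpha_i\in\mathcal U_{a_i}\}$. Call a subset of $\Gamma^k$ decomposable if it is a union of pairwise disjoint members of $\mathcal A_k$ (the empty union, giving $\emptyset$, is allowed). Let $E_k$ be the family of all $p\subseteq\Gamma^k$ such that both $p$ and $\Gamma^k\setminus p$ are decomposable. For $p,q\in E_k$, $p\oplus q$ is defined iff $p\cap q=\emptyset$ and $\Gamma^k\setminus(p\cup q)$ is decomposable, and then $p\oplus q=p\cup q$. An effect algebra is a set $E$ with a partial binary operation $\oplus$ and elements $0,1$ such that: (E1) if $p\oplus q$ is defined then $q\oplus p$ is defined and equal; (E2) if $q\oplus r$ and $p\oplus(q\oplus r)$ are defined then $p\oplus q$ and $(p\oplus q)\oplus r$ are defined and $p\oplus(q\oplus r)=(p\oplus q)\oplus r$; (E3) for each $p$ there is a unique $q$ with $p\oplus q=1$; (E4) if $p\oplus1$ is defined then $p=0$. A state on an effect algebra is a map $\rho:E\to[0,1]$ with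 $\rho(1)=1$ and $\rho(p_1\oplus\dots\oplus p_n)=\sum_i\rho(p_i)$ whenever the left side is defined. A PR-state of the $k$-box model is a function $P(\alpha_1\dots\alpha_k\mid a_1\dots a_k)\ge0$, defined for $a_i\in\{1,\dots,N\}$, $\alpha_i\in\mathcal U_{a_i}$, such that for each input tuple $\sum_{\alpha_1,\dots,\alpha_k}P(\alpha_1\dots\alpha_k\mid a_1\dots a_k)=1$, and satisfying no-signaling: for every $i$, every $a_1,\dots,a_k$, every $b_i$ and every fixed $\alpha_j$ ($j\ne i$), $\sum_{\alpha_i\in\mathcal U_{a_i}}P(\alpha_1\dots\alpha_i\dots\alpha_k\mid a_1\dots a_i\dots a_k)=\sum_{\beta_i\in\mathcal U_{b_i}}P(\alpha_1\dots\beta_i\dots\alpha_k\mid a_1\dots b_i\dots a_k)$. *)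

theory Defs
  imports Complex_Main "HOL-Library.FuncSet"
begin

text \<open>Inputs are natural numbers in {1..N}; outputs for input a form the finite
nonempty set U a (of an arbitrary type 'o). Gamma^k is modelled by
lists of length k of points of Gamma; input/output tuples are lists of length k.\<close>

definition gam :: "nat \<Rightarrow> (nat \<Rightarrow> 'o set) \<Rightarrow> (nat \<Rightarrow> 'o) set" where
  "gam N U = PiE {1..N} U"

definition gamk :: "nat \<Rightarrow> (nat \<Rightarrow> 'o set) \<Rightarrow> nat \<Rightarrow> (nat \<Rightarrow> 'o) list set" where
  "gamk N U k = {xs. length xs = k \<and> set xs \<subseteq> gam N U}"

definition cylset :: "nat \<Rightarrow> (nat \<Rightarrow> 'o set) \<Rightarrow> nat \<Rightarrow> 'o set \<Rightarrow> (nat \<Rightarrow> 'o) set" where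
  "cylset N U a A = {\<gamma> \<in> gam N U. \<gamma> a \<in> A}"

definition cyl :: "nat \<Rightarrow> (nat \<Rightarrow> 'o set) \<Rightarrow> nat \<Rightarrow> 'o \<Rightarrow> (nat \<Rightarrow> 'o) set" where
  "cyl N U a \<alpha> = cylset N U a {\<alpha>}"

definition inputs :: "nat \<Rightarrow> nat \<Rightarrow> nat list set" where
  "inputs N k = {as. length as = k \<and> (\<forall>i<k. as ! i \<in> {1..N})}"

definition outs :: "(nat \<Rightarrow> 'o set) \<Rightarrow> nat list \<Rightarrow> 'o list set" where
  "outs U as = {al. length al = length as \<and> (\<forall>i<length as. al ! i \<in> U (as ! i))}"

definition IO :: "nat \<Rightarrow> (nat \<Rightarrow> 'o set) \<Rightarrow> nat \<Rightarrow> (nat list \<times> 'o list) set" where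
  "IO N U k = {(as, al). as \<in> inputs N k \<and> al \<in> outs U as}"

definition box :: "nat \<Rightarrow> (nat \<Rightarrow> 'o set) \<Rightarrow> nat list \<Rightarrow> 'o list \<Rightarrow> (nat \<Rightarrow> 'o) list set" where
  "box N U as al = {xs. length xs = length as \<and> (\<forall>i<length as. xs ! i \<in> cyl N U (as ! i) (al ! i))}"

definition Ak :: "nat \<Rightarrow> (nat \<Rightarrow> 'o set) \<Rightarrow> nat \<Rightarrow> (nat \<Rightarrow> 'o) list set set" where
  "Ak N U k = {box N U as al | as al. (as, al) \<in> IO N U k}"

definition decomposable :: "nat \<Rightarrow> (nat \<Rightarrow> 'o set) \<Rightarrow> nat \<Rightarrow> (nat \<Rightarrow> 'o) list set \<Rightarrow> bool" where
  "decomposable N U k p = (\<exists>F. F \<subseteq> Ak N U k \<and> pairwise disjnt F \<and> \<Union>F = p)"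

definition Ek :: "nat \<Rightarrow> (nat \<Rightarrow> 'o set) \<Rightarrow> nat \<Rightarrow> (nat \<Rightarrow> 'o) list set set" where
  "Ek N U k = {p. p \<subseteq> gamk N U k \<and> decomposable N U k p \<and> decomposable N U k (gamk N U k - p)}"

text \<open>partial operation: None = undefined\<close>
definition oplusk :: "nat \<Rightarrow> (nat \<Rightarrow> 'o set) \<Rightarrow> nat \<Rightarrow> (nat \<Rightarrow> 'o) list set \<Rightarrow> (nat \<Rightarrow> 'o) list set
    \<Rightarrow> (nat \<Rightarrow> 'o) list set option" where
  "oplusk N U k p q =
     (if p \<inter> q = {} \<and> decomposable N U k (gamk N U k - (p \<union> q)) then Some (p \<union> q) else None)"

definition effect_algebra :: "'a set \<Rightarrow> ('a \<Rightarrow> 'a \<Rightarrow> 'a option) \<Rightarrow> 'a \<Rightarrow> 'a \<Rightarrow> bool" where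
  "effect_algebra E f zero one \<longleftrightarrow>
     zero \<in> E \<and> one \<in> E \<and>
     (\<forall>p\<in>E. \<forall>q\<in>E. \<forall>r. f p q = Some r \<longrightarrow> r \<in> E) \<and>
     (\<forall>p\<in>E. \<forall>q\<in>E. \<forall>r. f p q = Some r \<longrightarrow> f q p = Some r) \<and>
     (\<forall>p\<in>E. \<forall>q\<in>E. \<forall>r\<in>E. \<forall>s t. f q r = Some s \<and> f p s = Some t \<longrightarrow>
         (\<exists>u. f p q = Some u \<and> f u r = Some t)) \<and>
     (\<forall>p\<in>E. \<exists>!q. q \<in> E \<and> f p q = Some one) \<and>
     (\<forall>p\<in>E. f p one \<noteq> None \<longrightarrow> p = zero)"

fun osum :: "('a \<Rightarrow> 'a \<Rightarrow> 'a option) \<Rightarrow> 'a list \<Rightarrow> 'a option" where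
  "osum f [] = None"
| "osum f [p] = Some p"
| "osum f (p # q # ps) = Option.bind (osum f (q # ps)) (f p)"

definition is_state :: "'a set \<Rightarrow> ('a \<Rightarrow> 'a \<Rightarrow> 'a option) \<Rightarrow> 'a \<Rightarrow> ('a \<Rightarrow> real) \<Rightarrow> bool" where
  "is_state E f one \<rho> \<longleftrightarrow>
     (\<forall>p\<in>E. 0 \<le> \<rho> p \<and> \<rho> p \<le> 1) \<and> \<rho> one = 1 \<and>
     (\<forall>ps s. ps \<noteq> [] \<and> set ps \<subseteq> E \<and> osum f ps = Some s \<longrightarrow> \<rho> s = sum_list (map \<rho> ps))"

text \<open>PR-states: P (as, al) = P(al_1 ... al_k | as_1 ... as_k).\<close>
definition is_PR :: "nat \<Rightarrow> (nat \<Rightarrow> 'o set) \<Rightarrow> nat \<Rightarrow> (nat list \<times> 'o list \<Rightarrow> real) \<Rightarrow> bool" where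
  "is_PR N U k P \<longleftrightarrow>
     (\<forall>x\<in>IO N U k. 0 \<le> P x) \<and>
     (\<forall>as\<in>inputs N k. (\<Sum>al\<in>outs U as. P (as, al)) = 1) \<and>
     (\<forall>i<k. \<forall>as\<in>inputs N k. \<forall>b\<in>{1..N}. \<forall>al. length al = k \<and>
         (\<forall>j<k. j \<noteq> i \<longrightarrow> al ! j \<in> U (as ! j)) \<longrightarrow>
         (\<Sum>\<alpha>\<in>U (as ! i). P (as, al[i := \<alpha>])) = (\<Sum>\<beta>\<in>U b. P (as[i := b], al[i := \<beta>])))"

definition PofS :: "nat \<Rightarrow> (nat \<Rightarrow> 'o set) \<Rightarrow> nat \<Rightarrow> ((nat \<Rightarrow> 'o) list set \<Rightarrow> real)
    \<Rightarrow> (nat list \<times> 'o list \<Rightarrow> real)" where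
  "PofS N U k \<rho> = restrict (\<lambda>(as, al). \<rho> (box N U as al)) (IO N U k)"

definition States :: "nat \<Rightarrow> (nat \<Rightarrow> 'o set) \<Rightarrow> nat \<Rightarrow> ((nat \<Rightarrow> 'o) list set \<Rightarrow> real) set" where
  "States N U k = {\<rho> \<in> extensional (Ek N U k). is_state (Ek N U k) (oplusk N U k) (gamk N U k) \<rho>}"

definition PRStates :: "nat \<Rightarrow> (nat \<Rightarrow> 'o set) \<Rightarrow> nat \<Rightarrow> (nat list \<times> 'o list \<Rightarrow> real) set" where
  "PRStates N U k = {P \<in> extensional (IO N U k). is_PR N U k P}"

end

theory Submission
  imports Defs "HOL-Library.Disjoint_Sets"
begin

text \<open>
  The effect-algebra axioms for \<open>E\<^sub>k\<close> come down to the fact that a disjoint union of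
  decomposable sets is decomposable. A state \<open>\<rho>\<close> yields a no-signaling box because summing
  \<open>P\<^sub>\<rho>\<close> over the \<open>i\<close>-th output gives \<open>\<rho>\<close> of the set on which only the other coordinates are
  constrained, and that set does not mention the \<open>i\<close>-th input.

  Conversely, a no-signaling box \<open>P\<close> has a signed local model: a real density \<open>\<mu>\<close> on \<open>\<Gamma>\<^sup>k\<close>
  whose mass on every box is the corresponding value of \<open>P\<close>. For one box whose input marginals
  all equal \<open>c\<close>, take \<open>\<mu> \<gamma> = ((\<Sum>a. |U a| * P (\<gamma> a | a)) - (N - 1) * c) / |\<Gamma>|\<close>; for \<open>k\<close> boxes
  apply this coordinate by coordinate, using that conditioning on the first input and output
  keeps the box no-signaling. Then \<open>\<rho>\<^sub>P p = (\<Sum>x\<in>p. \<mu> x)\<close> is additive by construction,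
  nonnegative on decomposable sets because boxes have mass \<open>P \<ge> 0\<close>, and normalised; it is the
  only state with these box values since every element of \<open>E\<^sub>k\<close> is a disjoint union of boxes.
\<close>

section \<open>Boxes and decomposable sets\<close>

lemma cyl_iff: "\<gamma> \<in> cyl N U a \<alpha> \<longleftrightarrow> \<gamma> \<in> gam N U \<and> \<gamma> a = \<alpha>"
  by (auto simp: cyl_def cylset_def)

lemma box_iff:
  "xs \<in> box N U as al \<longleftrightarrow>
     length xs = length as \<and> (\<forall>i<length as. xs ! i \<in> gam N U \<and> (xs ! i) (as ! i) = al ! i)"
  by (auto simp: box_def cyl_iff)

lemma box_subset_gamk: "length as = k \<Longrightarrow> box N U as al \<subseteq> gamk N U k"
  by (auto simp: box_iff gamk_def in_set_conv_nth)

lemma Ak_subset_gamk: "X \<in> Ak N U k \<Longrightarrow> X \<subseteq> gamk N U k"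
  by (auto simp: Ak_def IO_def inputs_def intro: box_subset_gamk[THEN subsetD])

lemma box_in_Ak: "(as, al) \<in> IO N U k \<Longrightarrow> box N U as al \<in> Ak N U k"
  unfolding Ak_def by blast

lemma box_disjoint:
  assumes "length al = length as" "length al' = length as" "al \<noteq> al'"
  shows "box N U as al \<inter> box N U as al' = {}"
proof -
  obtain i where "i < length as" "al ! i \<noteq> al' ! i"
    using assms nth_equalityI by metis
  then show ?thesis by (auto simp: box_iff)
qed

lemma box_disjoint_outs:
  "al \<in> outs U as \<Longrightarrow> al' \<in> outs U as \<Longrightarrow> al \<noteq> al' \<Longrightarrow> box N U as al \<inter> box N U as al' = {}"
  by (rule box_disjoint) (auto simp: outs_def)

lemma disjoint_family_box: "disjoint_family_on (box N U as) (outs U as)"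
  by (simp add: disjoint_family_on_def box_disjoint_outs)

lemma gamk_eq_UN_box:
  assumes "as \<in> inputs N k"
  shows "gamk N U k = (\<Union>al\<in>outs U as. box N U as al)"
proof (intro equalityI subsetI)
  fix xs assume xs: "xs \<in> gamk N U k"
  let ?al = "map (\<lambda>i. (xs ! i) (as ! i)) [0..<k]"
  have gam: "xs ! i \<in> gam N U" and "as ! i \<in> {1..N}" if "i < k" for i
    using xs assms that by (auto simp: gamk_def inputs_def)
  then have "(xs ! i) (as ! i) \<in> U (as ! i)" if "i < k" for i
    using that unfolding gam_def by (metis PiE_mem)
  with gam have "?al \<in> outs U as" "xs \<in> box N U as ?al"
    using xs assms by (auto simp: gamk_def inputs_def outs_def box_iff)
  then show "xs \<in> (\<Union>al\<in>outs U as. box N U as al)" by blast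
next
  fix xs assume "xs \<in> (\<Union>al\<in>outs U as. box N U as al)"
  then show "xs \<in> gamk N U k"
    using box_subset_gamk[of as k N U] assms by (auto simp: inputs_def)
qed

lemma gamk_Diff_UN_box:
  assumes "as \<in> inputs N k" "S \<subseteq> outs U as"
  shows "gamk N U k - (\<Union>al\<in>S. box N U as al) = (\<Union>al\<in>outs U as - S. box N U as al)"
proof (intro equalityI subsetI)
  fix xs assume xs: "xs \<in> gamk N U k - (\<Union>al\<in>S. box N U as al)"
  then obtain al where "al \<in> outs U as" "xs \<in> box N U as al"
    using gamk_eq_UN_box[OF assms(1), of U] by auto
  moreover have "al \<notin> S" using xs calculation(2) by auto
  ultimately show "xs \<in> (\<Union>al\<in>outs U as - S. box N U as al)" by auto
next
  fix xs assume "xs \<in> (\<Union>al\<in>outs U as - S. box N U as al)"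
  then obtain al where al: "al \<in> outs U as" "al \<notin> S" "xs \<in> box N U as al" by auto
  have "xs \<notin> box N U as al'" if "al' \<in> S" for al'
  proof
    assume "xs \<in> box N U as al'"
    moreover have "box N U as al \<inter> box N U as al' = {}"
      using box_disjoint_outs[OF al(1)] al(2) that assms(2) by auto
    ultimately show False using al(3) by auto
  qed
  moreover have "xs \<in> gamk N U k"
    using al gamk_eq_UN_box[OF assms(1), of U] by auto
  ultimately show "xs \<in> gamk N U k - (\<Union>al\<in>S. box N U as al)" by auto
qed

lemma decomposable_empty: "decomposable N U k {}"
  unfolding decomposable_def by (rule exI[of _ "{}"]) auto

lemma decomposable_Ak: "X \<in> Ak N U k \<Longrightarrow> decomposable N U k X"
  unfolding decomposable_def by (intro exI[of _ "{X}"]) auto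

lemma decomposable_Un:
  assumes "decomposable N U k A" "decomposable N U k B" "A \<inter> B = {}"
  shows "decomposable N U k (A \<union> B)"
proof -
  obtain FA FB where F: "FA \<subseteq> Ak N U k" "pairwise disjnt FA" "\<Union>FA = A"
    "FB \<subseteq> Ak N U k" "pairwise disjnt FB" "\<Union>FB = B"
    using assms(1,2) unfolding decomposable_def by blast
  have "pairwise disjnt (FA \<union> FB)"
  proof (rule pairwiseI)
    fix X Y assume XY: "X \<in> FA \<union> FB" "Y \<in> FA \<union> FB" "X \<noteq> Y"
    show "disjnt X Y"
    proof (cases "X \<in> FA \<longleftrightarrow> Y \<in> FA")
      case True
      then show ?thesis using XY F(2,5) by (auto simp: pairwise_def)
    next
      case False
      then show ?thesis using XY F(3,6) assms(3) by (auto simp: disjnt_def)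
    qed
  qed
  moreover have "FA \<union> FB \<subseteq> Ak N U k" "\<Union>(FA \<union> FB) = A \<union> B"
    using F by auto
  ultimately show ?thesis
    unfolding decomposable_def by blast
qed

lemma decomposable_UN_box:
  assumes "as \<in> inputs N k" "S \<subseteq> outs U as"
  shows "decomposable N U k (\<Union>al\<in>S. box N U as al)"
  unfolding decomposable_def
proof (intro exI conjI)
  show "box N U as ` S \<subseteq> Ak N U k"
    using assms by (auto intro!: box_in_Ak simp: IO_def)
  show "pairwise disjnt (box N U as ` S)"
  proof (rule pairwise_imageI)
    fix al al' assume "al \<in> S" "al' \<in> S" "al \<noteq> al'"
    then show "disjnt (box N U as al) (box N U as al')"
      unfolding disjnt_def using assms(2) by (intro box_disjoint_outs) auto
  qed
qed simp

lemma replicate_one_inputs: "N \<ge> 1 \<Longrightarrow> replicate k 1 \<in> inputs N k"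
  by (auto simp: inputs_def)

lemma decomposable_gamk:
  assumes "N \<ge> 1"
  shows "decomposable N U k (gamk N U k)"
proof -
  have as: "replicate k 1 \<in> inputs N k" using assms by (rule replicate_one_inputs)
  show ?thesis
    unfolding gamk_eq_UN_box[OF as, of U] by (rule decomposable_UN_box[OF as order_refl])
qed

lemma Ak_subset_Ek: "Ak N U k \<subseteq> Ek N U k"
proof
  fix X assume X: "X \<in> Ak N U k"
  then obtain as al where "X = box N U as al" "as \<in> inputs N k" "al \<in> outs U as"
    by (auto simp: Ak_def IO_def)
  moreover have "gamk N U k - box N U as al = (\<Union>al'\<in>outs U as - {al}. box N U as al')"
    using gamk_Diff_UN_box[of as N k "{al}" U] calculation by simp
  ultimately show "X \<in> Ek N U k"
    using Ak_subset_gamk[OF X] decomposable_Ak[OF X] decomposable_UN_box[of as N k "outs U as - {al}" U]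
    by (simp add: Ek_def)
qed

section \<open>The effect algebra \<open>E\<^sub>k\<close>\<close>

lemma Ek_subset_gamk: "p \<in> Ek N U k \<Longrightarrow> p \<subseteq> gamk N U k"
  by (simp add: Ek_def)

lemma empty_in_Ek: "N \<ge> 1 \<Longrightarrow> {} \<in> Ek N U k"
  by (simp add: Ek_def decomposable_empty decomposable_gamk)

lemma gamk_in_Ek: "N \<ge> 1 \<Longrightarrow> gamk N U k \<in> Ek N U k"
  by (simp add: Ek_def decomposable_empty decomposable_gamk)

lemma oplusk_eq_Some:
  "oplusk N U k p q = Some r \<longleftrightarrow>
     p \<inter> q = {} \<and> decomposable N U k (gamk N U k - (p \<union> q)) \<and> r = p \<union> q"
  by (auto simp: oplusk_def)

lemma oplusk_commute: "oplusk N U k p q = oplusk N U k q p"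
  by (simp add: oplusk_def Int_commute Un_commute)

lemma oplusk_closed:
  assumes "p \<in> Ek N U k" "q \<in> Ek N U k" "oplusk N U k p q = Some r"
  shows "r \<in> Ek N U k"
  using assms decomposable_Un by (auto simp: Ek_def oplusk_eq_Some)

lemma oplusk_assoc:
  assumes "r \<in> Ek N U k" "oplusk N U k q r = Some s" "oplusk N U k p s = Some t"
  shows "oplusk N U k p q = Some (p \<union> q) \<and> oplusk N U k (p \<union> q) r = Some t"
proof -
  have "gamk N U k - (p \<union> q) = (gamk N U k - t) \<union> r"
    using assms Ek_subset_gamk[OF assms(1)] by (auto simp: oplusk_eq_Some)
  moreover have "decomposable N U k (gamk N U k - t)" "decomposable N U k r" "r \<subseteq> t"
    using assms by (auto simp: Ek_def oplusk_eq_Some)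
  moreover have "(gamk N U k - t) \<inter> r = {}" using \<open>r \<subseteq> t\<close> by blast
  ultimately have "decomposable N U k (gamk N U k - (p \<union> q))"
    by (metis decomposable_Un)
  then show ?thesis using assms by (auto simp: oplusk_eq_Some Un_assoc)
qed

lemma oplusk_eq_gamk_iff:
  assumes "p \<in> Ek N U k" "q \<in> Ek N U k"
  shows "oplusk N U k p q = Some (gamk N U k) \<longleftrightarrow> q = gamk N U k - p"
proof -
  have "gamk N U k - (p \<union> (gamk N U k - p)) = {}" "p \<union> (gamk N U k - p) = gamk N U k"
    using Ek_subset_gamk[OF assms(1)] by auto
  then show ?thesis
    using Ek_subset_gamk[OF assms(2)] decomposable_empty[of N U k] by (auto simp: oplusk_eq_Some)
qed

lemma effect_algebra_Ek:
  assumes "N \<ge> 1"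
  shows "effect_algebra (Ek N U k) (oplusk N U k) {} (gamk N U k)"
  unfolding effect_algebra_def
proof (intro conjI ballI allI impI)
  show "{} \<in> Ek N U k" "gamk N U k \<in> Ek N U k"
    using assms by (rule empty_in_Ek, rule gamk_in_Ek)
next
  fix p q r assume "p \<in> Ek N U k" "q \<in> Ek N U k" "oplusk N U k p q = Some r"
  then show "r \<in> Ek N U k" "oplusk N U k q p = Some r"
    by (auto intro: oplusk_closed simp: oplusk_commute)
next
  fix p q r s t
  assume "r \<in> Ek N U k" "oplusk N U k q r = Some s \<and> oplusk N U k p s = Some t"
  then show "\<exists>u. oplusk N U k p q = Some u \<and> oplusk N U k u r = Some t"
    using oplusk_assoc by blast
next
  fix p assume p: "p \<in> Ek N U k"
  have "gamk N U k - p \<in> Ek N U k" using p by (auto simp: Ek_def double_diff)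
  then show "\<exists>!q. q \<in> Ek N U k \<and> oplusk N U k p q = Some (gamk N U k)"
    using oplusk_eq_gamk_iff[OF p] by blast
  show "oplusk N U k p (gamk N U k) \<noteq> None \<Longrightarrow> p = {}"
    using Ek_subset_gamk[OF p] by (auto simp: oplusk_def Int_absorb2 split: if_splits)
qed

section \<open>States on \<open>E\<^sub>k\<close>\<close>

lemma osum_oplusk_eq_Some_Union:
  assumes "ps \<noteq> []" "\<forall>p\<in>set ps. decomposable N U k p \<and> p \<subseteq> gamk N U k" "sorted_wrt disjnt ps"
    "decomposable N U k (gamk N U k - \<Union>(set ps))"
  shows "osum (oplusk N U k) ps = Some (\<Union>(set ps))"
  using assms
proof (induction "oplusk N U k" ps rule: osum.induct)
  case (3 p q ps)
  let ?S = "\<Union>(set (q # ps))"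
  have disj: "p \<inter> ?S = {}" using "3.prems"(3) by (auto simp: disjnt_def)
  have "decomposable N U k ((gamk N U k - (p \<union> ?S)) \<union> p)"
    by (rule decomposable_Un) (use "3.prems"(2,4) in auto)
  moreover have "(gamk N U k - (p \<union> ?S)) \<union> p = gamk N U k - ?S"
    using "3.prems"(2) disj by auto
  ultimately have "decomposable N U k (gamk N U k - ?S)" by simp
  then have "osum (oplusk N U k) (q # ps) = Some ?S"
    using "3" by simp
  moreover have "oplusk N U k p ?S = Some (p \<union> ?S)"
    using disj "3.prems"(4) by (simp add: oplusk_eq_Some)
  ultimately show ?case by simp
qed auto

lemma osum_oplusk_eq_SomeD:
  "osum (oplusk N U k) ps = Some s \<Longrightarrow> s = \<Union>(set ps) \<and> sorted_wrt disjnt ps"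
proof (induction ps arbitrary: s rule: induct_list012)
  case (3 p q ps)
  then obtain s' where "osum (oplusk N U k) (q # ps) = Some s'" "oplusk N U k p s' = Some s"
    by (cases "osum (oplusk N U k) (q # ps)") auto
  moreover from this(1) have "s' = \<Union>(set (q # ps))" "sorted_wrt disjnt (q # ps)"
    using "3.IH"(2) by blast+
  ultimately show ?case by (auto simp: oplusk_eq_Some disjnt_def[of p])
qed auto

lemma osum_oplusk_in_Ek:
  "set ps \<subseteq> Ek N U k \<Longrightarrow> osum (oplusk N U k) ps = Some s \<Longrightarrow> s \<in> Ek N U k"
proof (induction ps arbitrary: s rule: induct_list012)
  case (3 p q ps)
  then obtain s' where "osum (oplusk N U k) (q # ps) = Some s'" "oplusk N U k p s' = Some s"
    by (cases "osum (oplusk N U k) (q # ps)") auto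
  with "3" show ?case by (auto intro: oplusk_closed)
qed auto

lemma sum_Union_sorted_wrt_disjnt:
  "\<forall>p\<in>set ps. finite p \<Longrightarrow> sorted_wrt disjnt ps \<Longrightarrow> sum f (\<Union>(set ps)) = sum_list (map (sum f) ps)"
proof (induction ps)
  case (Cons p ps)
  then have "disjnt p (\<Union>(set ps))" by (auto simp: disjnt_def)
  with Cons show ?case by (simp add: sum.union_disjoint disjnt_def)
qed simp

abbreviation is_state_k :: "nat \<Rightarrow> (nat \<Rightarrow> 'o set) \<Rightarrow> nat \<Rightarrow> ((nat \<Rightarrow> 'o) list set \<Rightarrow> real) \<Rightarrow> bool"
  where "is_state_k N U k \<equiv> is_state (Ek N U k) (oplusk N U k) (gamk N U k)"

lemma state_osum:
  "is_state_k N U k \<rho> \<Longrightarrow> ps \<noteq> [] \<Longrightarrow> set ps \<subseteq> Ek N U k \<Longrightarrow> osum (oplusk N U k) ps = Some s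
    \<Longrightarrow> \<rho> s = sum_list (map \<rho> ps)"
  by (simp add: is_state_def)

lemma state_empty:
  assumes "N \<ge> 1" "is_state_k N U k \<rho>"
  shows "\<rho> {} = 0"
proof -
  have "osum (oplusk N U k) [{}, gamk N U k] = Some (gamk N U k)"
    using decomposable_empty[of N U k] by (simp add: oplusk_eq_Some)
  then have "\<rho> (gamk N U k) = sum_list (map \<rho> [{}, gamk N U k])"
    by (rule state_osum[OF assms(2), rotated 2])
      (simp_all add: empty_in_Ek[OF assms(1)] gamk_in_Ek[OF assms(1)])
  then show ?thesis by simp
qed

lemma state_UN_disjoint:
  assumes "N \<ge> 1" "is_state_k N U k \<rho>" "finite A" "B ` A \<subseteq> Ak N U k" "disjoint_family_on B A"
    "decomposable N U k (gamk N U k - (\<Union>\<alpha>\<in>A. B \<alpha>))"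
  shows "\<rho> (\<Union>\<alpha>\<in>A. B \<alpha>) = (\<Sum>\<alpha>\<in>A. \<rho> (B \<alpha>))"
proof (cases "A = {}")
  case True
  then show ?thesis using state_empty[OF assms(1,2)] by simp
next
  case False
  obtain xs where xs: "distinct xs" "set xs = A" using finite_distinct_list[OF assms(3)] by blast
  with False have "xs \<noteq> []" by auto
  have "sorted_wrt (\<lambda>\<alpha> \<beta>. disjnt (B \<alpha>) (B \<beta>)) xs"
    unfolding sorted_wrt_iff_nth_less
  proof (intro allI impI)
    fix i j assume "i < j" "j < length xs"
    then have "xs ! i \<noteq> xs ! j" "xs ! i \<in> A" "xs ! j \<in> A"
      using xs by (simp_all add: nth_eq_iff_index_eq flip: xs(2))
    then show "disjnt (B (xs ! i)) (B (xs ! j))"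
      using assms(5) by (simp add: disjoint_family_on_def disjnt_def)
  qed
  then have "sorted_wrt disjnt (map B xs)" by (simp add: sorted_wrt_map)
  moreover have "\<forall>p\<in>set (map B xs). decomposable N U k p \<and> p \<subseteq> gamk N U k"
  proof
    fix p assume "p \<in> set (map B xs)"
    then have "p \<in> Ak N U k" using xs assms(4) by auto
    then show "decomposable N U k p \<and> p \<subseteq> gamk N U k"
      by (simp add: decomposable_Ak Ak_subset_gamk)
  qed
  ultimately have "osum (oplusk N U k) (map B xs) = Some (\<Union>\<alpha>\<in>A. B \<alpha>)"
    using osum_oplusk_eq_Some_Union[of "map B xs" N U k] \<open>xs \<noteq> []\<close> xs assms(6) by simp
  then have "\<rho> (\<Union>\<alpha>\<in>A. B \<alpha>) = sum_list (map \<rho> (map B xs))"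
    by (rule state_osum[OF assms(2), rotated 2])
      (use xs \<open>xs \<noteq> []\<close> assms(4) Ak_subset_Ek[of N U k] in auto)
  also have "\<dots> = (\<Sum>\<alpha>\<in>A. \<rho> (B \<alpha>))"
    using xs by (simp add: sum_list_distinct_conv_sum_set)
  finally show ?thesis .
qed

lemma gamk_finite:
  assumes "\<forall>a\<in>{1..N}. finite (U a)"
  shows "finite (gamk N U k)"
proof -
  have "finite (gam N U)" using assms by (auto simp: gam_def intro!: finite_PiE)
  then show ?thesis unfolding gamk_def using finite_lists_length_eq by (simp add: conj_commute)
qed

lemma outs_finite:
  assumes "as \<in> inputs N k" "\<forall>a\<in>{1..N}. finite (U a)"
  shows "finite (outs U as)"
proof -
  have "outs U as \<subseteq> {al. set al \<subseteq> (\<Union>a\<in>{1..N}. U a) \<and> length al = length as}"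
    using assms(1) by (fastforce simp: outs_def inputs_def in_set_conv_nth)
  moreover have "finite (\<Union>a\<in>{1..N}. U a)" using assms(2) by blast
  ultimately show ?thesis using finite_lists_length_eq finite_subset by blast
qed

lemma state_eq_sum_decomposition:
  assumes "N \<ge> 1" "\<forall>a\<in>{1..N}. finite (U a)" "is_state_k N U k \<rho>"
    "p \<in> Ek N U k" "F \<subseteq> Ak N U k" "pairwise disjnt F" "\<Union>F = p"
  shows "\<rho> p = (\<Sum>q\<in>F. \<rho> q)"
proof -
  have "F \<subseteq> Pow (gamk N U k)" using assms(5) Ak_subset_gamk by blast
  then have "finite F" using gamk_finite[OF assms(2)] by (meson finite_Pow_iff finite_subset)
  moreover have "disjoint_family_on id F"
    using assms(6) by (auto simp: disjoint_family_on_def pairwise_def disjnt_def)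
  ultimately show ?thesis
    using state_UN_disjoint[OF assms(1,3), of F id] assms(4-7) by (simp add: Ek_def)
qed

lemma states_eq_if_eq_on_boxes:
  assumes "N \<ge> 1" "\<forall>a\<in>{1..N}. finite (U a)" "is_state_k N U k \<rho>" "is_state_k N U k \<rho>'"
    "\<And>as al. (as, al) \<in> IO N U k \<Longrightarrow> \<rho> (box N U as al) = \<rho>' (box N U as al)"
    "p \<in> Ek N U k"
  shows "\<rho> p = \<rho>' p"
proof -
  obtain F where F: "F \<subseteq> Ak N U k" "pairwise disjnt F" "\<Union>F = p"
    using assms(6) by (auto simp: Ek_def decomposable_def)
  have "\<rho> q = \<rho>' q" if "q \<in> F" for q
    using that F(1) assms(5) by (auto simp: Ak_def)
  then have "(\<Sum>q\<in>F. \<rho> q) = (\<Sum>q\<in>F. \<rho>' q)" by (rule sum.cong[OF refl])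
  then show ?thesis
    using state_eq_sum_decomposition[OF assms(1,2,3,6) F] state_eq_sum_decomposition[OF assms(1,2,4,6) F]
    by simp
qed

lemma state_restrict_Ek:
  assumes "is_state_k N U k \<rho>" "N \<ge> 1"
  shows "is_state_k N U k (restrict \<rho> (Ek N U k))"
  unfolding is_state_def
proof (intro conjI ballI allI impI)
  show "restrict \<rho> (Ek N U k) (gamk N U k) = 1"
    using assms gamk_in_Ek[OF assms(2), of U k] by (simp add: is_state_def)
next
  fix p assume "p \<in> Ek N U k"
  then show "0 \<le> restrict \<rho> (Ek N U k) p" "restrict \<rho> (Ek N U k) p \<le> 1"
    using assms(1) by (auto simp: is_state_def)
next
  fix ps s assume ps: "ps \<noteq> [] \<and> set ps \<subseteq> Ek N U k \<and> osum (oplusk N U k) ps = Some s"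
  then have "restrict \<rho> (Ek N U k) s = \<rho> s" using osum_oplusk_in_Ek[of ps N U k s] by simp
  also have "\<dots> = sum_list (map \<rho> ps)" using state_osum[OF assms(1)] ps by blast
  also have "map \<rho> ps = map (restrict \<rho> (Ek N U k)) ps" using ps by (intro map_cong) auto
  finally show "restrict \<rho> (Ek N U k) s = sum_list (map (restrict \<rho> (Ek N U k)) ps)" .
qed

section \<open>States induce no-signaling boxes\<close>

text \<open>It does not depend on the \<open>i\<close>-th input, and its state is the marginal of
  \<open>P\<^sub>\<rho>\<close> over the \<open>i\<close>-th output: this is where no-signaling comes from.\<close>
definition box_except :: "nat \<Rightarrow> (nat \<Rightarrow> 'o set) \<Rightarrow> nat \<Rightarrow> nat \<Rightarrow> nat list \<Rightarrow> 'o list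
    \<Rightarrow> (nat \<Rightarrow> 'o) list set" where
  "box_except N U k i as al = {xs \<in> gamk N U k. \<forall>j<k. j \<noteq> i \<longrightarrow> xs ! j \<in> cyl N U (as ! j) (al ! j)}"

lemma box_except_update: "box_except N U k i (as[i := b]) al = box_except N U k i as al"
  by (simp add: box_except_def)

lemma box_except_eq_UN_box:
  assumes "as \<in> inputs N k" "i < k" "length al = k"
  shows "box_except N U k i as al = (\<Union>\<alpha>\<in>U (as ! i). box N U as (al[i := \<alpha>]))"
proof (intro equalityI subsetI)
  fix xs assume xs: "xs \<in> box_except N U k i as al"
  then have "xs ! i \<in> gam N U" "as ! i \<in> {1..N}" "length xs = k"
    using assms by (auto simp: box_except_def gamk_def inputs_def)
  then have "(xs ! i) (as ! i) \<in> U (as ! i)"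
    unfolding gam_def by (metis PiE_mem)
  moreover have "xs \<in> box N U as (al[i := (xs ! i) (as ! i)])"
    using xs assms \<open>xs ! i \<in> gam N U\<close> \<open>length xs = k\<close>
    by (auto simp: box_except_def box_iff cyl_iff inputs_def nth_list_update)
  ultimately show "xs \<in> (\<Union>\<alpha>\<in>U (as ! i). box N U as (al[i := \<alpha>]))" by blast
next
  fix xs assume "xs \<in> (\<Union>\<alpha>\<in>U (as ! i). box N U as (al[i := \<alpha>]))"
  then obtain \<alpha> where "xs \<in> box N U as (al[i := \<alpha>])" by blast
  moreover have "box N U as (al[i := \<alpha>]) \<subseteq> gamk N U k"
    using assms(1) by (intro box_subset_gamk) (simp add: inputs_def)
  ultimately show "xs \<in> box_except N U k i as al"
    using assms by (auto simp: box_except_def box_iff cyl_iff inputs_def)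
qed

lemma state_box_except:
  assumes "N \<ge> 1" "\<forall>a\<in>{1..N}. finite (U a)" "is_state_k N U k \<rho>"
    "as \<in> inputs N k" "i < k" "length al = k" "\<forall>j<k. j \<noteq> i \<longrightarrow> al ! j \<in> U (as ! j)"
  shows "\<rho> (box_except N U k i as al) = (\<Sum>\<alpha>\<in>U (as ! i). \<rho> (box N U as (al[i := \<alpha>])))"
proof -
  let ?T = "(\<lambda>\<alpha>. al[i := \<alpha>]) ` U (as ! i)"
  have asi: "as ! i \<in> {1..N}" using assms(4,5) by (simp add: inputs_def)
  have T: "?T \<subseteq> outs U as"
    using assms(4-7) by (auto simp: outs_def inputs_def nth_list_update)
  have "decomposable N U k (gamk N U k - (\<Union>al'\<in>?T. box N U as al'))"
    using gamk_Diff_UN_box[OF assms(4) T] decomposable_UN_box[OF assms(4), of "outs U as - ?T"]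
    by simp
  have "\<rho> (\<Union>\<alpha>\<in>U (as ! i). box N U as (al[i := \<alpha>])) = (\<Sum>\<alpha>\<in>U (as ! i). \<rho> (box N U as (al[i := \<alpha>])))"
  proof (rule state_UN_disjoint[OF assms(1,3)])
    show "finite (U (as ! i))" using assms(2) asi by blast
    show "(\<lambda>\<alpha>. box N U as (al[i := \<alpha>])) ` U (as ! i) \<subseteq> Ak N U k"
      using T assms(4) by (auto intro!: box_in_Ak simp: IO_def)
    show "disjoint_family_on (\<lambda>\<alpha>. box N U as (al[i := \<alpha>])) (U (as ! i))"
    unfolding disjoint_family_on_def
    proof (intro ballI impI)
      fix \<alpha> \<beta> assume "\<alpha> \<in> U (as ! i)" "\<beta> \<in> U (as ! i)" "\<alpha> \<noteq> \<beta>"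
      moreover have "al[i := \<alpha>] ! i = \<alpha>" "al[i := \<beta>] ! i = \<beta>" using assms(5,6) by simp_all
      ultimately show "box N U as (al[i := \<alpha>]) \<inter> box N U as (al[i := \<beta>]) = {}"
        using T by (intro box_disjoint_outs) auto
    qed
    show "decomposable N U k (gamk N U k - (\<Union>\<alpha>\<in>U (as ! i). box N U as (al[i := \<alpha>])))"
      using \<open>decomposable N U k (gamk N U k - (\<Union>al'\<in>?T. box N U as al'))\<close> by (simp add: image_image)
  qed
  then show ?thesis using box_except_eq_UN_box[OF assms(4,5,6)] by simp
qed

lemma PofS_eq: "(as, al) \<in> IO N U k \<Longrightarrow> PofS N U k \<rho> (as, al) = \<rho> (box N U as al)"
  by (simp add: PofS_def)

lemma state_imp_PR:
  assumes "N \<ge> 1" "\<forall>a\<in>{1..N}. finite (U a)" "is_state_k N U k \<rho>"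
  shows "is_PR N U k (PofS N U k \<rho>)"
  unfolding is_PR_def
proof (intro conjI ballI allI impI)
  fix x assume x: "x \<in> IO N U k"
  then obtain as al where "x = (as, al)" by force
  then show "0 \<le> PofS N U k \<rho> x"
    using x assms(3) box_in_Ak Ak_subset_Ek by (force simp: PofS_eq is_state_def)
next
  fix as assume as: "as \<in> inputs N k"
  have "(\<Sum>al\<in>outs U as. PofS N U k \<rho> (as, al)) = (\<Sum>al\<in>outs U as. \<rho> (box N U as al))"
    using as by (simp add: PofS_eq IO_def)
  also have "\<dots> = \<rho> (\<Union>al\<in>outs U as. box N U as al)"
  proof (rule state_UN_disjoint[OF assms(1,3), symmetric])
    show "finite (outs U as)" using outs_finite[OF as assms(2)] .
    show "box N U as ` outs U as \<subseteq> Ak N U k" using as by (auto intro!: box_in_Ak simp: IO_def)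
    show "disjoint_family_on (box N U as) (outs U as)" by (rule disjoint_family_box)
    show "decomposable N U k (gamk N U k - (\<Union>al\<in>outs U as. box N U as al))"
      using gamk_eq_UN_box[OF as, of U] decomposable_empty by simp
  qed
  also have "\<dots> = 1" using gamk_eq_UN_box[OF as, of U] assms(3) by (simp add: is_state_def)
  finally show "(\<Sum>al\<in>outs U as. PofS N U k \<rho> (as, al)) = 1" .
next
  fix i as b al
  assume i: "i < k" and as: "as \<in> inputs N k" and b: "b \<in> {1..N}"
    and al: "length al = k \<and> (\<forall>j<k. j \<noteq> i \<longrightarrow> al ! j \<in> U (as ! j))"
  have as': "as[i := b] \<in> inputs N k" using as b i by (auto simp: inputs_def nth_list_update)
  have "(\<Sum>\<alpha>\<in>U (as ! i). PofS N U k \<rho> (as, al[i := \<alpha>])) = \<rho> (box_except N U k i as al)"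
    using state_box_except[OF assms as i] al as i
    by (auto simp: PofS_eq IO_def outs_def inputs_def nth_list_update intro!: sum.cong)
  also have "\<dots> = \<rho> (box_except N U k i (as[i := b]) al)" by (simp add: box_except_update)
  also have "\<dots> = (\<Sum>\<beta>\<in>U b. PofS N U k \<rho> (as[i := b], al[i := \<beta>]))"
    using state_box_except[OF assms as' i] al as' i b
    by (auto simp: PofS_eq IO_def outs_def inputs_def nth_list_update intro!: sum.cong)
  finally show "(\<Sum>\<alpha>\<in>U (as ! i). PofS N U k \<rho> (as, al[i := \<alpha>])) =
      (\<Sum>\<beta>\<in>U b. PofS N U k \<rho> (as[i := b], al[i := \<beta>]))" .
qed

section \<open>A signed local model of a no-signaling box\<close>

lemma card_mult_sum_PiE_component:
  fixes f :: "'b \<Rightarrow> 'c::comm_semiring_1"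
  assumes "finite I" "a \<in> I" "\<And>i. i \<in> I \<Longrightarrow> finite (V i)"
  shows "of_nat (card (V a)) * (\<Sum>g\<in>PiE I V. f (g a)) = of_nat (card (PiE I V)) * sum f (V a)"
proof -
  let ?P = "\<Prod>i\<in>I - {a}. of_nat (card (V i)) :: 'c"
  have "(\<Sum>g\<in>PiE I V. f (g a)) = (\<Sum>g\<in>PiE I V. \<Prod>i\<in>I. if i = a then f (g i) else 1)"
    using assms(1,2) by simp
  also have "\<dots> = (\<Prod>i\<in>I. \<Sum>\<alpha>\<in>V i. if i = a then f \<alpha> else 1)"
    by (rule prod_sum_PiE[OF assms(1,3), symmetric])
  also have "\<dots> = (\<Prod>i\<in>I. if i = a then sum f (V a) else of_nat (card (V i)))"
    by (rule prod.cong) simp_all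
  also have "\<dots> = sum f (V a) * ?P"
  proof -
    have "(\<Prod>i\<in>I - {a}. if i = a then sum f (V a) else of_nat (card (V i))) = ?P"
      by (rule prod.cong) auto
    then show ?thesis by (simp add: prod.remove[OF assms(1,2)])
  qed
  finally have "(\<Sum>g\<in>PiE I V. f (g a)) = sum f (V a) * ?P" .
  moreover have "of_nat (card (PiE I V)) = (of_nat (card (V a)) * ?P :: 'c)"
    by (simp add: card_PiE[OF assms(1)] prod.remove[OF assms(1,2)])
  ultimately show ?thesis by (simp add: ac_simps)
qed

lemma cyl_eq_PiE:
  assumes "b \<in> {1..N}" "\<beta> \<in> U b"
  shows "cyl N U b \<beta> = PiE {1..N} (U(b := {\<beta>}))"
proof (intro equalityI subsetI)
  fix \<gamma> assume "\<gamma> \<in> cyl N U b \<beta>"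
  then have "\<gamma> \<in> PiE {1..N} U" "\<gamma> b = \<beta>" by (simp_all add: cyl_iff gam_def)
  then show "\<gamma> \<in> PiE {1..N} (U(b := {\<beta>}))" by (auto simp: PiE_iff)
next
  fix \<gamma> assume \<gamma>: "\<gamma> \<in> PiE {1..N} (U(b := {\<beta>}))"
  then have "\<gamma> b = \<beta>" using PiE_mem[OF \<gamma> assms(1)] by simp
  moreover have "\<gamma> \<in> PiE {1..N} U" using \<gamma> assms(2) by (auto simp: PiE_iff split: if_splits)
  ultimately show "\<gamma> \<in> cyl N U b \<beta>" by (simp add: cyl_iff gam_def)
qed

lemma card_gam_eq_mult_card_cyl:
  assumes "\<forall>a\<in>{1..N}. finite (U a)" "b \<in> {1..N}" "\<beta> \<in> U b"
  shows "card (gam N U) = card (U b) * card (cyl N U b \<beta>)"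
proof -
  have "card (U b) * (\<Sum>\<gamma>\<in>gam N U. if \<gamma> b = \<beta> then 1 else 0) =
      card (gam N U) * (\<Sum>\<alpha>\<in>U b. if \<alpha> = \<beta> then 1 else (0::nat))"
    using card_mult_sum_PiE_component[of "{1..N}" b U "\<lambda>\<alpha>. if \<alpha> = \<beta> then 1 else (0::nat)"] assms
    by (simp add: gam_def)
  moreover have "finite (gam N U)" using assms(1) by (auto simp: gam_def intro!: finite_PiE)
  then have "(\<Sum>\<gamma>\<in>gam N U. if \<gamma> b = \<beta> then 1 else 0) = card (cyl N U b \<beta>)"
    using sum.inter_filter[of "gam N U" "\<lambda>_. 1::nat" "\<lambda>\<gamma>. \<gamma> b = \<beta>"]
    by (simp add: cyl_def cylset_def)
  ultimately show ?thesis using assms by simp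
qed

lemma card_gam_pos:
  assumes "\<forall>a\<in>{1..N}. finite (U a) \<and> U a \<noteq> {}"
  shows "card (gam N U) > 0"
  using assms by (auto simp: gam_def card_PiE card_gt_0_iff intro!: prod_pos)

text \<open>A signed density on \<open>\<Gamma>\<close> with mass \<open>\<phi> b \<beta>\<close> on each cylinder \<open>[b\<beta>]\<close>, provided all sums
  \<open>\<Sum>\<alpha>\<in>U a. \<phi> a \<alpha>\<close> agree (\<open>sum_quasi_prob1_cyl\<close>). The common value is read off at input \<open>1\<close>,
  which keeps the density linear in \<open>\<phi>\<close>.\<close>
definition quasi_prob1 :: "nat \<Rightarrow> (nat \<Rightarrow> 'o set) \<Rightarrow> (nat \<Rightarrow> 'o \<Rightarrow> real) \<Rightarrow> (nat \<Rightarrow> 'o) \<Rightarrow> real" where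
  "quasi_prob1 N U \<phi> \<gamma> =
     ((\<Sum>a\<in>{1..N}. real (card (U a)) * \<phi> a (\<gamma> a)) - (real N - 1) * sum (\<phi> 1) (U 1))
       / real (card (gam N U))"

lemma sum_quasi_prob1:
  "(\<Sum>x\<in>B. quasi_prob1 N U (\<phi> x) \<gamma>) = quasi_prob1 N U (\<lambda>a \<alpha>. \<Sum>x\<in>B. \<phi> x a \<alpha>) \<gamma>"
  by (simp add: quasi_prob1_def sum_divide_distrib[symmetric] sum_subtractf sum_distrib_left
      sum.swap[of _ B])

lemma sum_quasi_prob1_cyl:
  assumes N: "N \<ge> 1" and U: "\<forall>a\<in>{1..N}. finite (U a) \<and> U a \<noteq> {}"
    and b: "b \<in> {1..N}" "\<beta> \<in> U b"
    and marg: "\<forall>a\<in>{1..N}. sum (\<phi> a) (U a) = sum (\<phi> 1) (U 1)"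
  shows "(\<Sum>\<gamma>\<in>cyl N U b \<beta>. quasi_prob1 N U \<phi> \<gamma>) = \<phi> b \<beta>"
proof -
  define c where "c = sum (\<phi> 1) (U 1)"
  define C where "C = real (card (cyl N U b \<beta>))"
  have col: "real (card (U a)) * (\<Sum>\<gamma>\<in>cyl N U b \<beta>. \<phi> a (\<gamma> a)) =
      C * (if a = b then real (card (U b)) * \<phi> b \<beta> else c)" if a: "a \<in> {1..N}" for a
  proof (cases "a = b")
    case True
    have "(\<Sum>\<gamma>\<in>cyl N U b \<beta>. \<phi> a (\<gamma> a)) = (\<Sum>\<gamma>\<in>cyl N U b \<beta>. \<phi> b \<beta>)"
      using True by (intro sum.cong) (simp_all add: cyl_iff)
    then show ?thesis using True by (simp add: C_def)
  next
    case False
    have "real (card (U a)) * (\<Sum>\<gamma>\<in>cyl N U b \<beta>. \<phi> a (\<gamma> a)) = C * sum (\<phi> a) (U a)"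
      using card_mult_sum_PiE_component[of "{1..N}" a "U(b := {\<beta>})" "\<phi> a"] U a False
      by (simp add: cyl_eq_PiE[of b N \<beta> U, OF b] C_def)
    then show ?thesis using False marg[rule_format, OF a] by (simp add: c_def)
  qed
  have G: "real (card (gam N U)) = real (card (U b)) * C"
    using card_gam_eq_mult_card_cyl[of N U b \<beta>] U b by (simp add: C_def)
  have "real (card (gam N U)) * (\<Sum>\<gamma>\<in>cyl N U b \<beta>. quasi_prob1 N U \<phi> \<gamma>) =
      (\<Sum>\<gamma>\<in>cyl N U b \<beta>. (\<Sum>a\<in>{1..N}. real (card (U a)) * \<phi> a (\<gamma> a)) - (real N - 1) * c)"
    using card_gam_pos[OF U] by (simp add: quasi_prob1_def sum_distrib_left c_def)
  also have "\<dots> = (\<Sum>a\<in>{1..N}. real (card (U a)) * (\<Sum>\<gamma>\<in>cyl N U b \<beta>. \<phi> a (\<gamma> a))) - C * (real N - 1) * c"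
    by (simp add: sum_subtractf sum_distrib_left C_def sum.swap[of _ "cyl N U b \<beta>"])
  also have "\<dots> = (\<Sum>a\<in>{1..N}. C * (if a = b then real (card (U b)) * \<phi> b \<beta> else c)) - C * (real N - 1) * c"
    using col by simp
  also have "(\<Sum>a\<in>{1..N}. C * (if a = b then real (card (U b)) * \<phi> b \<beta> else c)) =
      C * (real (card (U b)) * \<phi> b \<beta> + real (card ({1..N} - {b})) * c)"
    using b(1) by (simp add: sum_distrib_left[symmetric] sum.delta_remove)
  also have "real (card ({1..N} - {b})) = real N - 1"
    using b(1) N by simp
  also have "C * (real (card (U b)) * \<phi> b \<beta> + (real N - 1) * c) - C * (real N - 1) * c =
      C * real (card (U b)) * \<phi> b \<beta>"
    by (simp add: algebra_simps)
  also have "\<dots> = real (card (gam N U)) * \<phi> b \<beta>" using G by simp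
  finally show ?thesis using card_gam_pos[OF U] by simp
qed

lemma quasi_prob1_cong:
  assumes "N \<ge> 1" "\<gamma> \<in> gam N U" "\<And>a \<alpha>. a \<in> {1..N} \<Longrightarrow> \<alpha> \<in> U a \<Longrightarrow> \<phi> a \<alpha> = \<psi> a \<alpha>"
  shows "quasi_prob1 N U \<phi> \<gamma> = quasi_prob1 N U \<psi> \<gamma>"
proof -
  have "\<phi> a (\<gamma> a) = \<psi> a (\<gamma> a)" if "a \<in> {1..N}" for a
    using assms(2,3) that unfolding gam_def by (simp add: PiE_mem)
  then have "(\<Sum>a\<in>{1..N}. real (card (U a)) * \<phi> a (\<gamma> a)) =
      (\<Sum>a\<in>{1..N}. real (card (U a)) * \<psi> a (\<gamma> a))"
    by (intro sum.cong) simp_all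
  moreover have "sum (\<phi> 1) (U 1) = sum (\<psi> 1) (U 1)"
    using assms(1,3) by (intro sum.cong) simp_all
  ultimately show ?thesis by (simp add: quasi_prob1_def)
qed

text \<open>The no-signaling clause of \<open>is_PR\<close> on its own: unlike PR-states, it is inherited by the
  conditional boxes \<open>Q(a\<alpha>\<dots>|a\<dots>)\<close>, which are neither normalised nor nonnegative in general.\<close>
definition no_signaling :: "nat \<Rightarrow> (nat \<Rightarrow> 'o set) \<Rightarrow> nat \<Rightarrow> (nat list \<times> 'o list \<Rightarrow> real) \<Rightarrow> bool" where
  "no_signaling N U k Q \<longleftrightarrow>
     (\<forall>i<k. \<forall>as\<in>inputs N k. \<forall>b\<in>{1..N}. \<forall>al. length al = k \<and> (\<forall>j<k. j \<noteq> i \<longrightarrow> al ! j \<in> U (as ! j)) \<longrightarrow>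
         (\<Sum>\<alpha>\<in>U (as ! i). Q (as, al[i := \<alpha>])) = (\<Sum>\<beta>\<in>U b. Q (as[i := b], al[i := \<beta>])))"

lemma is_PR_iff:
  "is_PR N U k P \<longleftrightarrow>
     (\<forall>x\<in>IO N U k. 0 \<le> P x) \<and> (\<forall>as\<in>inputs N k. (\<Sum>al\<in>outs U as. P (as, al)) = 1) \<and>
     no_signaling N U k P"
  by (simp add: is_PR_def no_signaling_def)

lemma no_signalingD:
  assumes "no_signaling N U k Q" "i < k" "as \<in> inputs N k" "b \<in> {1..N}" "length al = k"
    "\<And>j. j < k \<Longrightarrow> j \<noteq> i \<Longrightarrow> al ! j \<in> U (as ! j)"
  shows "(\<Sum>\<alpha>\<in>U (as ! i). Q (as, al[i := \<alpha>])) = (\<Sum>\<beta>\<in>U b. Q (as[i := b], al[i := \<beta>]))"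
  using assms unfolding no_signaling_def by blast

lemma Cons_in_inputs_iff: "a # as \<in> inputs N (Suc k) \<longleftrightarrow> a \<in> {1..N} \<and> as \<in> inputs N k"
  by (auto simp: inputs_def All_less_Suc2)

lemma Cons_in_outs_iff: "\<alpha> # al \<in> outs U (a # as) \<longleftrightarrow> \<alpha> \<in> U a \<and> al \<in> outs U as"
  by (auto simp: outs_def All_less_Suc2)

lemma no_signaling_Cons:
  assumes "no_signaling N U (Suc k) Q" "a \<in> {1..N}" "\<alpha> \<in> U a"
  shows "no_signaling N U k (\<lambda>(as, al). Q (a # as, \<alpha> # al))"
  unfolding no_signaling_def
proof (intro allI impI ballI)
  fix i as b al assume i: "i < k" and as: "as \<in> inputs N k" and b: "b \<in> {1..N}"
    and al: "length al = k \<and> (\<forall>j<k. j \<noteq> i \<longrightarrow> al ! j \<in> U (as ! j))"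
  have "(\<Sum>\<alpha>'\<in>U ((a # as) ! Suc i). Q (a # as, (\<alpha> # al)[Suc i := \<alpha>'])) =
      (\<Sum>\<beta>\<in>U b. Q ((a # as)[Suc i := b], (\<alpha> # al)[Suc i := \<beta>]))"
  proof (rule no_signalingD[OF assms(1)])
    fix j assume "j < Suc k" "j \<noteq> Suc i"
    then show "(\<alpha> # al) ! j \<in> U ((a # as) ! j)"
      using al assms(3) by (cases j) auto
  qed (use i as b al assms(2) in \<open>simp_all add: Cons_in_inputs_iff\<close>)
  then show "(\<Sum>\<alpha>'\<in>U (as ! i). (\<lambda>(as, al). Q (a # as, \<alpha> # al)) (as, al[i := \<alpha>'])) =
      (\<Sum>\<beta>\<in>U b. (\<lambda>(as, al). Q (a # as, \<alpha> # al)) (as[i := b], al[i := \<beta>]))"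
    by simp
qed

lemma no_signaling_head_marginal:
  assumes "no_signaling N U (Suc k) Q" "N \<ge> 1" "a \<in> {1..N}" "(bs, bl) \<in> IO N U k"
  shows "(\<Sum>\<alpha>\<in>U a. Q (a # bs, \<alpha> # bl)) = (\<Sum>\<alpha>\<in>U 1. Q (1 # bs, \<alpha> # bl))"
proof -
  have len: "length bl = k" using assms(4) by (simp add: IO_def outs_def inputs_def)
  have "(\<Sum>\<alpha>\<in>U ((a # bs) ! 0). Q (a # bs, (undefined # bl)[0 := \<alpha>])) =
      (\<Sum>\<beta>\<in>U 1. Q ((a # bs)[0 := 1], (undefined # bl)[0 := \<beta>]))"
  proof (rule no_signalingD[OF assms(1)])
    fix j assume "j < Suc k" "j \<noteq> 0"
    then show "(undefined # bl) ! j \<in> U ((a # bs) ! j)"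
      using assms(4) by (cases j) (auto simp: IO_def outs_def inputs_def)
  qed (use assms len in \<open>simp_all add: IO_def Cons_in_inputs_iff\<close>)
  then show ?thesis by simp
qed

lemma box_Cons:
  "box N U (b # bs) (\<beta> # bl) = (\<lambda>(\<gamma>, xs). \<gamma> # xs) ` (cyl N U b \<beta> \<times> box N U bs bl)"
proof (intro equalityI subsetI)
  fix xs assume xs: "xs \<in> box N U (b # bs) (\<beta> # bl)"
  then obtain \<gamma> ys where "xs = \<gamma> # ys" by (cases xs) (auto simp: box_def)
  with xs show "xs \<in> (\<lambda>(\<gamma>, xs). \<gamma> # xs) ` (cyl N U b \<beta> \<times> box N U bs bl)"
    by (intro image_eqI[of _ _ "(\<gamma>, ys)"]) (auto simp: box_def All_less_Suc2)
qed (auto simp: box_def All_less_Suc2)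

fun quasi_prob :: "nat \<Rightarrow> (nat \<Rightarrow> 'o set) \<Rightarrow> (nat list \<times> 'o list \<Rightarrow> real) \<Rightarrow> (nat \<Rightarrow> 'o) list \<Rightarrow> real"
  where
    "quasi_prob N U Q [] = Q ([], [])"
  | "quasi_prob N U Q (\<gamma> # xs) =
       quasi_prob1 N U (\<lambda>a \<alpha>. quasi_prob N U (\<lambda>(as, al). Q (a # as, \<alpha> # al)) xs) \<gamma>"

lemma sum_quasi_prob_box:
  assumes N: "N \<ge> 1" and U: "\<forall>a\<in>{1..N}. finite (U a) \<and> U a \<noteq> {}"
  shows "no_signaling N U k Q \<Longrightarrow> (bs, bl) \<in> IO N U k \<Longrightarrow>
    (\<Sum>xs\<in>box N U bs bl. quasi_prob N U Q xs) = Q (bs, bl)"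
proof (induction k arbitrary: Q bs bl)
  case 0
  then have "bs = []" "bl = []" by (auto simp: IO_def inputs_def outs_def)
  moreover have "box N U [] [] = {[]}" by (auto simp: box_def)
  ultimately show ?case by simp
next
  case (Suc k)
  obtain b bs' \<beta> bl' where bs: "bs = b # bs'" and bl: "bl = \<beta> # bl'"
    using Suc.prems(2) by (cases bs; cases bl) (auto simp: IO_def inputs_def outs_def)
  have b: "b \<in> {1..N}" "\<beta> \<in> U b" and IO': "(bs', bl') \<in> IO N U k"
    using Suc.prems(2) by (simp_all add: bs bl IO_def Cons_in_inputs_iff Cons_in_outs_iff)
  have IH: "(\<Sum>xs\<in>box N U bs' bl'. quasi_prob N U (\<lambda>(as, al). Q (a # as, \<alpha> # al)) xs) =
      Q (a # bs', \<alpha> # bl')" if "a \<in> {1..N}" "\<alpha> \<in> U a" for a \<alpha>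
    using Suc.IH[OF no_signaling_Cons[OF Suc.prems(1) that] IO'] by simp
  have inj: "inj_on (\<lambda>(\<gamma>, xs). \<gamma> # xs) (cyl N U b \<beta> \<times> box N U bs' bl')"
    by (auto simp: inj_on_def)
  have "(\<Sum>xs\<in>box N U bs bl. quasi_prob N U Q xs) =
      (\<Sum>(\<gamma>, xs)\<in>cyl N U b \<beta> \<times> box N U bs' bl'. quasi_prob N U Q (\<gamma> # xs))"
    unfolding bs bl box_Cons sum.reindex[OF inj]
    by (simp add: comp_def case_prod_unfold del: quasi_prob.simps)
  also have "\<dots> = (\<Sum>\<gamma>\<in>cyl N U b \<beta>. \<Sum>xs\<in>box N U bs' bl'. quasi_prob N U Q (\<gamma> # xs))"
    by (rule sum.cartesian_product[symmetric])
  also have "\<dots> = (\<Sum>\<gamma>\<in>cyl N U b \<beta>. quasi_prob1 N U (\<lambda>a \<alpha>. Q (a # bs', \<alpha> # bl')) \<gamma>)"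
  proof (rule sum.cong[OF refl])
    fix \<gamma> assume "\<gamma> \<in> cyl N U b \<beta>"
    then have "\<gamma> \<in> gam N U" by (simp add: cyl_iff)
    have "(\<Sum>xs\<in>box N U bs' bl'. quasi_prob N U Q (\<gamma> # xs)) =
        quasi_prob1 N U (\<lambda>a \<alpha>. \<Sum>xs\<in>box N U bs' bl'. quasi_prob N U (\<lambda>(as, al). Q (a # as, \<alpha> # al)) xs) \<gamma>"
      by (simp add: sum_quasi_prob1)
    also have "\<dots> = quasi_prob1 N U (\<lambda>a \<alpha>. Q (a # bs', \<alpha> # bl')) \<gamma>"
      by (rule quasi_prob1_cong[OF N \<open>\<gamma> \<in> gam N U\<close>]) (simp add: IH)
    finally show "(\<Sum>xs\<in>box N U bs' bl'. quasi_prob N U Q (\<gamma> # xs)) =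
        quasi_prob1 N U (\<lambda>a \<alpha>. Q (a # bs', \<alpha> # bl')) \<gamma>" .
  qed
  also have "\<dots> = Q (b # bs', \<beta> # bl')"
    by (rule sum_quasi_prob1_cyl[OF N U b])
      (use no_signaling_head_marginal[OF Suc.prems(1) N _ IO'] in blast)
  finally show ?case by (simp add: bs bl)
qed

section \<open>No-signaling boxes induce states\<close>

definition quasi_state :: "nat \<Rightarrow> (nat \<Rightarrow> 'o set) \<Rightarrow> (nat list \<times> 'o list \<Rightarrow> real)
    \<Rightarrow> (nat \<Rightarrow> 'o) list set \<Rightarrow> real" where
  "quasi_state N U P p = (\<Sum>xs\<in>p. quasi_prob N U P xs)"

lemma quasi_state_box:
  assumes "N \<ge> 1" "\<forall>a\<in>{1..N}. finite (U a) \<and> U a \<noteq> {}" "is_PR N U k P" "(as, al) \<in> IO N U k"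
  shows "quasi_state N U P (box N U as al) = P (as, al)"
proof -
  have "no_signaling N U k P" using assms(3) by (simp add: is_PR_iff)
  then show ?thesis
    unfolding quasi_state_def by (rule sum_quasi_prob_box[OF assms(1,2) _ assms(4)])
qed

lemma quasi_state_Union:
  assumes "\<forall>a\<in>{1..N}. finite (U a)" "F \<subseteq> Pow (gamk N U k)" "pairwise disjnt F"
  shows "quasi_state N U P (\<Union>F) = (\<Sum>q\<in>F. quasi_state N U P q)"
proof -
  have "\<forall>A\<in>F. finite A"
  proof
    fix A assume "A \<in> F"
    then have "A \<subseteq> gamk N U k" using assms(2) by blast
    then show "finite A" using gamk_finite[OF assms(1)] by (rule finite_subset)
  qed
  moreover have "\<forall>A\<in>F. \<forall>B\<in>F. A \<noteq> B \<longrightarrow> A \<inter> B = {}"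
    using assms(3) by (auto simp: pairwise_def disjnt_def)
  ultimately show ?thesis unfolding quasi_state_def by (simp add: sum.Union_disjoint)
qed

lemma quasi_state_nonneg:
  assumes "N \<ge> 1" "\<forall>a\<in>{1..N}. finite (U a) \<and> U a \<noteq> {}" "is_PR N U k P" "decomposable N U k p"
  shows "0 \<le> quasi_state N U P p"
proof -
  obtain F where F: "F \<subseteq> Ak N U k" "pairwise disjnt F" "\<Union>F = p"
    using assms(4) by (auto simp: decomposable_def)
  have "F \<subseteq> Pow (gamk N U k)" using F(1) Ak_subset_gamk by blast
  then have "quasi_state N U P p = (\<Sum>q\<in>F. quasi_state N U P q)"
    using quasi_state_Union[of N U F k P] F(2,3) assms(2) by simp
  also have "\<dots> \<ge> 0"
  proof (rule sum_nonneg)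
    fix q assume "q \<in> F"
    then obtain as al where "q = box N U as al" "(as, al) \<in> IO N U k"
      using F(1) by (auto simp: Ak_def)
    moreover have "0 \<le> P (as, al)" using assms(3) calculation(2) by (simp add: is_PR_iff)
    ultimately show "0 \<le> quasi_state N U P q" using quasi_state_box[OF assms(1-3)] by simp
  qed
  finally show ?thesis .
qed

lemma quasi_state_gamk:
  assumes "N \<ge> 1" "\<forall>a\<in>{1..N}. finite (U a) \<and> U a \<noteq> {}" "is_PR N U k P"
  shows "quasi_state N U P (gamk N U k) = 1"
proof -
  let ?as = "replicate k 1"
  have as: "?as \<in> inputs N k" using assms(1) by (rule replicate_one_inputs)
  have fin: "\<forall>a\<in>{1..N}. finite (U a)" using assms(2) by blast
  have "quasi_state N U P (gamk N U k) = (\<Sum>al\<in>outs U ?as. quasi_state N U P (box N U ?as al))"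
    unfolding gamk_eq_UN_box[OF as, of U] quasi_state_def
  proof (rule sum.UNION_disjoint)
    show "finite (outs U ?as)" by (rule outs_finite[OF as fin])
    show "\<forall>al\<in>outs U ?as. finite (box N U ?as al)"
    proof
      fix al
      show "finite (box N U ?as al)"
        by (rule finite_subset[OF box_subset_gamk gamk_finite[OF fin]]) simp
    qed
    show "\<forall>al\<in>outs U ?as. \<forall>al'\<in>outs U ?as. al \<noteq> al' \<longrightarrow> box N U ?as al \<inter> box N U ?as al' = {}"
      using disjoint_family_box[of N U ?as] by (simp add: disjoint_family_on_def)
  qed
  also have "\<dots> = (\<Sum>al\<in>outs U ?as. P (?as, al))"
    using as quasi_state_box[OF assms] by (simp add: IO_def)
  also have "\<dots> = 1" using assms(3) as by (simp add: is_PR_iff)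
  finally show ?thesis .
qed

lemma quasi_state_osum:
  assumes "\<forall>a\<in>{1..N}. finite (U a)" "set ps \<subseteq> Ek N U k" "osum (oplusk N U k) ps = Some s"
  shows "quasi_state N U P s = sum_list (map (quasi_state N U P) ps)"
proof -
  have "\<forall>p\<in>set ps. finite p"
  proof
    fix p assume "p \<in> set ps"
    then have "p \<subseteq> gamk N U k" using assms(2) Ek_subset_gamk by blast
    then show "finite p" using gamk_finite[OF assms(1)] by (rule finite_subset)
  qed
  moreover have "s = \<Union>(set ps)" "sorted_wrt disjnt ps"
    using osum_oplusk_eq_SomeD[OF assms(3)] by simp_all
  ultimately show ?thesis
    unfolding quasi_state_def by (simp add: sum_Union_sorted_wrt_disjnt)
qed

lemma quasi_state_is_state:
  assumes "N \<ge> 1" "\<forall>a\<in>{1..N}. finite (U a) \<and> U a \<noteq> {}" "is_PR N U k P"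
  shows "is_state_k N U k (quasi_state N U P)"
  unfolding is_state_def
proof (intro conjI ballI allI impI)
  fix p assume p: "p \<in> Ek N U k"
  have fin: "\<forall>a\<in>{1..N}. finite (U a)" using assms(2) by blast
  have "quasi_state N U P (gamk N U k) = quasi_state N U P (gamk N U k - p) + quasi_state N U P p"
    unfolding quasi_state_def
    by (rule sum.subset_diff[OF Ek_subset_gamk[OF p] gamk_finite[OF fin]])
  moreover have "0 \<le> quasi_state N U P p"
    by (rule quasi_state_nonneg[OF assms]) (use p in \<open>simp add: Ek_def\<close>)
  moreover have "0 \<le> quasi_state N U P (gamk N U k - p)"
    by (rule quasi_state_nonneg[OF assms]) (use p in \<open>simp add: Ek_def\<close>)
  ultimately show "0 \<le> quasi_state N U P p" "quasi_state N U P p \<le> 1"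
    using quasi_state_gamk[OF assms] by linarith+
next
  show "quasi_state N U P (gamk N U k) = 1" by (rule quasi_state_gamk[OF assms])
next
  fix ps s assume ps: "ps \<noteq> [] \<and> set ps \<subseteq> Ek N U k \<and> osum (oplusk N U k) ps = Some s"
  have "\<forall>a\<in>{1..N}. finite (U a)" using assms(2) by blast
  then show "quasi_state N U P s = sum_list (map (quasi_state N U P) ps)"
    by (rule quasi_state_osum[where k = k]) (use ps in simp_all)
qed

lemma bij_betw_PofS_States_PRStates:
  assumes "N \<ge> 1" "\<forall>a\<in>{1..N}. finite (U a) \<and> U a \<noteq> {}"
  shows "bij_betw (PofS N U k) (States N U k) (PRStates N U k)"
  unfolding bij_betw_def
proof
  have fin: "\<forall>a\<in>{1..N}. finite (U a)" using assms(2) by blast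
  show "inj_on (PofS N U k) (States N U k)"
  proof (rule inj_onI)
    fix \<rho> \<rho>' assume r: "\<rho> \<in> States N U k" "\<rho>' \<in> States N U k"
      and eq: "PofS N U k \<rho> = PofS N U k \<rho>'"
    have "\<rho> (box N U as al) = \<rho>' (box N U as al)" if "(as, al) \<in> IO N U k" for as al
      using PofS_eq[OF that, of \<rho>] PofS_eq[OF that, of \<rho>'] eq by simp
    then have "\<rho> p = \<rho>' p" if "p \<in> Ek N U k" for p
      using states_eq_if_eq_on_boxes[OF assms(1) fin _ _ _ that] r by (simp add: States_def)
    then show "\<rho> = \<rho>'"
      using r by (auto simp: States_def intro: extensionalityI)
  qed
  show "PofS N U k ` States N U k = PRStates N U k"
  proof (intro equalityI subsetI)
    fix P assume "P \<in> PofS N U k ` States N U k"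
    then obtain \<rho> where "is_state_k N U k \<rho>" "P = PofS N U k \<rho>"
      by (auto simp: States_def)
    moreover have "PofS N U k \<rho> \<in> extensional (IO N U k)" by (simp add: PofS_def)
    ultimately show "P \<in> PRStates N U k"
      using state_imp_PR[OF assms(1) fin] by (simp add: PRStates_def)
  next
    fix P assume "P \<in> PRStates N U k"
    then have P: "is_PR N U k P" "P \<in> extensional (IO N U k)" by (auto simp: PRStates_def)
    let ?\<rho> = "restrict (quasi_state N U P) (Ek N U k)"
    have "?\<rho> \<in> States N U k"
      using state_restrict_Ek[OF quasi_state_is_state[OF assms P(1)] assms(1)] by (simp add: States_def)
    moreover have "PofS N U k ?\<rho> = P"
    proof (rule extensionalityI[OF _ P(2)])
      show "PofS N U k ?\<rho> \<in> extensional (IO N U k)" by (simp add: PofS_def)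
      fix x assume x: "x \<in> IO N U k"
      obtain as al where x_eq: "x = (as, al)" by force
      have "box N U as al \<in> Ek N U k"
        using box_in_Ak[of as al N U k] Ak_subset_Ek x x_eq by blast
      then show "PofS N U k ?\<rho> x = P x"
        using x x_eq quasi_state_box[OF assms P(1)] by (simp add: PofS_eq)
    qed
    ultimately show "P \<in> PofS N U k ` States N U k" by (metis image_eqI)
  qed
qed

lemma PR_imp_unique_state:
  assumes "N \<ge> 1" "\<forall>a\<in>{1..N}. finite (U a) \<and> U a \<noteq> {}" "is_PR N U k P"
  shows "\<exists>\<rho>. is_state_k N U k \<rho>
     \<and> (\<forall>(as, al)\<in>IO N U k. \<rho> (box N U as al) = P (as, al))
     \<and> (\<forall>\<rho>'. is_state_k N U k \<rho>' \<and> (\<forall>(as, al)\<in>IO N U k. \<rho>' (box N U as al) = P (as, al))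
             \<longrightarrow> (\<forall>p\<in>Ek N U k. \<rho>' p = \<rho> p))
     \<and> (\<forall>p\<in>Ek N U k. \<forall>F. F \<subseteq> Ak N U k \<and> pairwise disjnt F \<and> \<Union>F = p
             \<longrightarrow> \<rho> p = (\<Sum>q\<in>F. \<rho> q))"
proof (intro exI conjI)
  have fin: "\<forall>a\<in>{1..N}. finite (U a)" using assms(2) by blast
  let ?\<rho> = "quasi_state N U P"
  show state: "is_state_k N U k ?\<rho>" by (rule quasi_state_is_state[OF assms])
  show "\<forall>(as, al)\<in>IO N U k. ?\<rho> (box N U as al) = P (as, al)"
    by (auto simp: quasi_state_box[OF assms])
  show "\<forall>\<rho>'. is_state_k N U k \<rho>' \<and> (\<forall>(as, al)\<in>IO N U k. \<rho>' (box N U as al) = P (as, al))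
      \<longrightarrow> (\<forall>p\<in>Ek N U k. \<rho>' p = ?\<rho> p)"
  proof (intro allI impI ballI)
    fix \<rho>' p assume h: "is_state_k N U k \<rho>' \<and> (\<forall>(as, al)\<in>IO N U k. \<rho>' (box N U as al) = P (as, al))"
      and p: "p \<in> Ek N U k"
    have agree: "\<rho>' (box N U as al) = ?\<rho> (box N U as al)" if "(as, al) \<in> IO N U k" for as al
      using h that quasi_state_box[OF assms that] by auto
    show "\<rho>' p = ?\<rho> p"
      using states_eq_if_eq_on_boxes[OF assms(1) fin conjunct1[OF h] state agree p] .
  qed
  show "\<forall>p\<in>Ek N U k. \<forall>F. F \<subseteq> Ak N U k \<and> pairwise disjnt F \<and> \<Union>F = p \<longrightarrow> ?\<rho> p = (\<Sum>q\<in>F. ?\<rho> q)"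
    by (auto intro: state_eq_sum_decomposition[OF assms(1) fin state])
qed

theorem mainTheorem1:
  fixes N k :: nat and U :: "nat \<Rightarrow> 'o set"
  assumes "N \<ge> 1" and "k \<ge> 1"
    and "\<And>a. a \<in> {1..N} \<Longrightarrow> finite (U a) \<and> U a \<noteq> {}"
  shows "(effect_algebra (Ek N U k) (oplusk N U k) {} (gamk N U k) \<and> Ak N U k \<subseteq> Ek N U k)
    \<and> (\<forall>\<rho>. is_state (Ek N U k) (oplusk N U k) (gamk N U k) \<rho> \<longrightarrow> is_PR N U k (PofS N U k \<rho>))
    \<and> (\<forall>P. is_PR N U k P \<longrightarrow>
           (\<exists>\<rho>. is_state (Ek N U k) (oplusk N U k) (gamk N U k) \<rho>
             \<and> (\<forall>(as, al)\<in>IO N U k. \<rho> (box N U as al) = P (as, al))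
             \<and> (\<forall>\<rho>'. is_state (Ek N U k) (oplusk N U k) (gamk N U k) \<rho>'
                     \<and> (\<forall>(as, al)\<in>IO N U k. \<rho>' (box N U as al) = P (as, al))
                     \<longrightarrow> (\<forall>p\<in>Ek N U k. \<rho>' p = \<rho> p))
             \<and> (\<forall>p\<in>Ek N U k. \<forall>F. F \<subseteq> Ak N U k \<and> pairwise disjnt F \<and> \<Union>F = p
                     \<longrightarrow> \<rho> p = (\<Sum>q\<in>F. \<rho> q))))
    \<and> bij_betw (PofS N U k) (States N U k) (PRStates N U k)"
proof -
  have U: "\<forall>a\<in>{1..N}. finite (U a) \<and> U a \<noteq> {}" using assms(3) by blast
  then have fin: "\<forall>a\<in>{1..N}. finite (U a)" by blast
  show ?thesis
  proof (intro conjI allI impI)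
    show "effect_algebra (Ek N U k) (oplusk N U k) {} (gamk N U k)"
      by (rule effect_algebra_Ek[OF assms(1)])
    show "Ak N U k \<subseteq> Ek N U k" by (rule Ak_subset_Ek)
    show "is_PR N U k (PofS N U k \<rho>)" if "is_state_k N U k \<rho>" for \<rho>
      using state_imp_PR[OF assms(1) fin that] .
    show "bij_betw (PofS N U k) (States N U k) (PRStates N U k)"
      by (rule bij_betw_PofS_States_PRStates[OF assms(1) U])
  qed (rule PR_imp_unique_state[OF assms(1) U])
qed

end
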